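(* Let $R$ be a commutative Noetherian ring and $n$ a non-negative integer. The class of $R$-modules that are in dimension $<n$ is a Serre subcategory of the category of $R$-modules, i.e. it is closed under taking submodules, quotients and extensions.
   Context: For an $R$-module $L$, $\dim\operatorname{Supp}L=\sup\{\dim R/\mathfrak p:\mathfrak p\in\operatorname{Supp}L\}$, the zero module having dimension $-\infty$. An $R$-module $L$ is "in dimension $<n$" if there is a finitely generated submodule $N\subseteq L$ with $\dim\operatorname{Supp}(L/N)<n$. *)

theory Defs
  imports Main "HOL-Library.Extended_Real"
begin

definition is_ideal :: "'r::comm_ring_1 set \<Rightarrow> bool" where
  "is_ideal I \<longleftrightarrow> 0 \<in> I \<and> (\<forall>x\<in>I. \<forall>y\<in>I. x + y \<in> I) \<and> (\<forall>r. \<forall>x\<in>I. r * x \<in> I)"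

definition prime_ideal :: "'r::comm_ring_1 set \<Rightarrow> bool" where
  "prime_ideal P \<longleftrightarrow> is_ideal P \<and> P \<noteq> UNIV \<and> (\<forall>a b. a * b \<in> P \<longrightarrow> a \<in> P \<or> b \<in> P)"

definition ideal_gen :: "'r::comm_ring_1 set \<Rightarrow> 'r set" where
  "ideal_gen F = {(\<Sum>a\<in>t. c a * a) | t c. finite t \<and> t \<subseteq> F}"

definition noetherian_ring :: "'r::comm_ring_1 itself \<Rightarrow> bool" where
  "noetherian_ring _ \<longleftrightarrow>
     (\<forall>I :: 'r set. is_ideal I \<longrightarrow> (\<exists>F. finite F \<and> F \<subseteq> I \<and> I = ideal_gen F))"

text \<open>Krull dimension of R/p: supremum of the lengths k of chains
  p = q_0 \<subset> q_1 \<subset> ... \<subset> q_k of prime ideals of R (primes of R/p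
  correspond to primes of R containing p).\<close>
definition dim_quot :: "'r::comm_ring_1 set \<Rightarrow> enat" where
  "dim_quot p = Sup {enat k | k. \<exists>q :: nat \<Rightarrow> 'r set. q 0 = p \<and>
       (\<forall>i\<le>k. prime_ideal (q i)) \<and> (\<forall>i<k. q i \<subset> q (Suc i))}"

text \<open>Support of the quotient module L/N (N a submodule of L): the prime
  ideals p with (L/N)_p \<noteq> 0, i.e. such that some class x + N has annihilator
  {r. r x \<in> N} contained in p.\<close>
definition Supp_quot ::
  "('r::comm_ring_1 \<Rightarrow> 'm::ab_group_add \<Rightarrow> 'm) \<Rightarrow> 'm set \<Rightarrow> 'm set \<Rightarrow> 'r set set" where
  "Supp_quot scale L N = {p. prime_ideal p \<and> (\<exists>x\<in>L. {r. scale r x \<in> N} \<subseteq> p)}"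

text \<open>dim Supp(L/N) = sup of dim R/p over p in Supp(L/N); the empty supremum
  in ereal is -\<infinity> (the zero module).\<close>
definition dim_Supp_quot ::
  "('r::comm_ring_1 \<Rightarrow> 'm::ab_group_add \<Rightarrow> 'm) \<Rightarrow> 'm set \<Rightarrow> 'm set \<Rightarrow> ereal" where
  "dim_Supp_quot scale L N = Sup ((\<lambda>p. ereal_of_enat (dim_quot p)) ` Supp_quot scale L N)"

definition in_dim_less ::
  "('r::comm_ring_1 \<Rightarrow> 'm::ab_group_add \<Rightarrow> 'm) \<Rightarrow> 'm set \<Rightarrow> nat \<Rightarrow> bool" where
  "in_dim_less scale L n \<longleftrightarrow>
     (\<exists>F. finite F \<and> F \<subseteq> L \<and> dim_Supp_quot scale L (module.span scale F) < ereal (real n))"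

definition linear_on ::
  "('r::comm_ring_1 \<Rightarrow> 'm::ab_group_add \<Rightarrow> 'm) \<Rightarrow> ('r \<Rightarrow> 'k::ab_group_add \<Rightarrow> 'k)
     \<Rightarrow> 'm set \<Rightarrow> ('m \<Rightarrow> 'k) \<Rightarrow> bool" where
  "linear_on s1 s2 M f \<longleftrightarrow>
     (\<forall>x\<in>M. \<forall>y\<in>M. f (x + y) = f x + f y) \<and> (\<forall>r. \<forall>x\<in>M. f (s1 r x) = s2 r (f x))"

end

theory Submission
  imports Defs
begin

text \<open>Over a Noetherian ring every submodule of a finitely generated module is finitely generated.
  Hence for L' \<subseteq> L one may take the generators of L' \<inter> N, where N is the submodule witnessing
  that L is in dimension < n; and the images of generators witness the statement for quotients.
  In both cases every prime in the new support already lies in the old one.  For an extension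
  0 \<rightarrow> L' \<rightarrow> L \<rightarrow> L'' \<rightarrow> 0 one takes the images of the generators for L' together with lifts of
  those for L''; a prime outside both supports kills every element of L modulo these generators
  after multiplication by a product of two elements outside the prime.\<close>

context module
begin

lemma is_ideal_span_insert_coeffs:
  assumes "subspace M"
  shows "is_ideal {r. \<exists>x\<in>M. x - r *s a \<in> span F}"
  unfolding is_ideal_def
proof (intro conjI ballI allI; clarsimp)
  show "\<exists>x\<in>M. x \<in> span F"
    using assms subspace_0 span_zero by blast
next
  fix x y r r' assume "x \<in> M" "x - r *s a \<in> span F" "y \<in> M" "y - r' *s a \<in> span F"
  then show "\<exists>z\<in>M. z - (r + r') *s a \<in> span F"
    by (intro bexI[of _ "x + y"]) (auto intro: subspace_add[OF assms] dest: span_add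
        simp: algebra_simps)
next
  fix x r c assume "x \<in> M" "x - r *s a \<in> span F"
  then show "\<exists>z\<in>M. z - (c * r) *s a \<in> span F"
    by (intro bexI[of _ "c *s x"]) (auto intro: subspace_scale[OF assms]
        dest: span_scale[where c=c] simp: algebra_simps)
qed

text \<open>Induction on the generators of the ambient module: modulo span F, the elements of M are
  multiples of a, and the possible coefficients form a finitely generated ideal.\<close>
lemma finitely_generated_subspace_of_span:
  assumes noeth: "noetherian_ring TYPE('a)" and "finite F"
    and "subspace M" and "M \<subseteq> span F"
  shows "\<exists>G. finite G \<and> G \<subseteq> M \<and> span G = M"
  using assms(2-)
proof (induction F arbitrary: M rule: finite_induct)
  case empty
  then have "M = {0}" using subspace_0 by auto
  then show ?case by (intro exI[of _ "{}"]) auto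
next
  case (insert a F)
  have "subspace (M \<inter> span F)" using insert.prems subspace_inter by blast
  then obtain G0 where G0: "finite G0" "G0 \<subseteq> M \<inter> span F" "span G0 = M \<inter> span F"
    using insert.IH[OF _ Int_lower2] by blast
  define I where "I = {r. \<exists>x\<in>M. x - r *s a \<in> span F}"
  have "is_ideal I" unfolding I_def using insert.prems(1) by (rule is_ideal_span_insert_coeffs)
  then obtain H where H: "finite H" "H \<subseteq> I" "I = ideal_gen H"
    using noeth unfolding noetherian_ring_def by blast
  have "\<forall>h\<in>H. \<exists>m. m \<in> M \<and> m - h *s a \<in> span F" using H(2) unfolding I_def by blast
  then obtain m where m: "\<And>h. h \<in> H \<Longrightarrow> m h \<in> M \<and> m h - h *s a \<in> span F" by metis
  define G where "G = G0 \<union> m ` H"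
  have GM: "G \<subseteq> M" unfolding G_def using G0 m by auto
  have "M \<subseteq> span G"
  proof
    fix x assume xM: "x \<in> M"
    then obtain k where k: "x - k *s a \<in> span F"
      using insert.prems(2) span_breakdown_eq by blast
    then have "k \<in> I" unfolding I_def using xM by blast
    then obtain t c where tc: "finite t" "t \<subseteq> H" "k = (\<Sum>b\<in>t. c b * b)"
      using H(3) unfolding ideal_gen_def by blast
    define y where "y = x - (\<Sum>b\<in>t. c b *s m b)"
    have "y \<in> M" unfolding y_def using xM tc m
      by (intro subspace_diff[OF insert.prems(1)] subspace_sum[OF insert.prems(1)]
          subspace_scale[OF insert.prems(1)]) auto
    have "y = (x - k *s a) - (\<Sum>b\<in>t. c b *s (m b - b *s a))"
      unfolding y_def tc(3) by (simp add: scale_right_diff_distrib sum_subtractf scale_sum_left)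
    moreover have "(\<Sum>b\<in>t. c b *s (m b - b *s a)) \<in> span F"
      using tc m by (intro span_sum span_scale) auto
    ultimately have "y \<in> span F" using k span_diff by simp
    then have "y \<in> span G" using \<open>y \<in> M\<close> G0 G_def span_mono by blast
    moreover have "(\<Sum>b\<in>t. c b *s m b) \<in> span G"
      using tc by (intro span_sum span_scale span_base) (auto simp: G_def)
    ultimately show "x \<in> span G" using span_add unfolding y_def by fastforce
  qed
  moreover have "span G \<subseteq> M" using GM span_minimal insert.prems(1) by blast
  moreover have "finite G" using G0 H unfolding G_def by auto
  ultimately show ?case using GM by blast
qed

end

lemma linear_on_zero:
  assumes "module s" "module.subspace s L" "linear_on s t L g"
  shows "g 0 = 0"
proof -
  have "g (0 + 0) = g 0 + g 0"
    using assms module.subspace_0 unfolding linear_on_def by blast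
  then show ?thesis by simp
qed

lemma linear_on_diff:
  assumes "module s" "module.subspace s L" "linear_on s t L g" "a \<in> L" "b \<in> L"
  shows "g (a - b) = g a - g b"
proof -
  have "g (a - b + b) = g (a - b) + g b"
    using assms module.subspace_diff unfolding linear_on_def by blast
  then show ?thesis by (simp add: algebra_simps)
qed

lemma linear_on_subspace_image:
  assumes ms: "module s" and mt: "module t" and sL: "module.subspace s L"
    and lin: "linear_on s t L g" and sM: "module.subspace s M" and M_sub_L: "M \<subseteq> L"
  shows "module.subspace t (g ` M)"
  unfolding module.subspace_def[OF mt]
proof (intro conjI ballI allI)
  show "0 \<in> g ` M"
    using linear_on_zero[OF ms sL lin] module.subspace_0[OF ms sM] by force
next
  fix x y assume "x \<in> g ` M" "y \<in> g ` M"
  then obtain a b where "a \<in> M" "b \<in> M" "x = g a" "y = g b" by blast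
  moreover have "g (a + b) = g a + g b" using lin \<open>a \<in> M\<close> \<open>b \<in> M\<close> M_sub_L
    unfolding linear_on_def by blast
  ultimately show "x + y \<in> g ` M" using module.subspace_add[OF ms sM] by force
next
  fix c x assume "x \<in> g ` M"
  then obtain a where "a \<in> M" "x = g a" by blast
  moreover have "g (s c a) = t c (g a)" using lin \<open>a \<in> M\<close> M_sub_L unfolding linear_on_def by blast
  ultimately show "t c x \<in> g ` M" using module.subspace_scale[OF ms sM] by (metis image_eqI)
qed

lemma linear_on_subspace_preimage:
  assumes ms: "module s" and mt: "module t" and sL: "module.subspace s L"
    and lin: "linear_on s t L g" and sN: "module.subspace t N"
  shows "module.subspace s {x \<in> L. g x \<in> N}"
  unfolding module.subspace_def[OF ms]
  using linear_on_zero[OF ms sL lin] module.subspace_0[OF ms sL] module.subspace_0[OF mt sN]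
    module.subspace_add[OF ms sL] module.subspace_add[OF mt sN]
    module.subspace_scale[OF ms sL] module.subspace_scale[OF mt sN] lin
  unfolding linear_on_def by auto

lemma linear_on_span_image:
  assumes ms: "module s" and mt: "module t" and sL: "module.subspace s L"
    and lin: "linear_on s t L g" and HL: "H \<subseteq> L"
  shows "g ` module.span s H = module.span t (g ` H)"
proof
  have "module.span s H \<subseteq> {x \<in> L. g x \<in> module.span t (g ` H)}"
    using HL module.span_superset[OF mt, of "g ` H"]
    by (intro module.span_minimal[OF ms] linear_on_subspace_preimage[OF ms mt sL lin]
        module.subspace_span[OF mt]) auto
  then show "g ` module.span s H \<subseteq> module.span t (g ` H)" by auto
  have "module.span s H \<subseteq> L" using module.span_minimal[OF ms HL sL] .
  then have "module.subspace t (g ` module.span s H)"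
    by (intro linear_on_subspace_image[OF ms mt sL lin] module.subspace_span[OF ms])
  then show "module.span t (g ` H) \<subseteq> g ` module.span s H"
    using module.span_superset[OF ms, of H] by (intro module.span_minimal[OF mt]) auto
qed

lemma Supp_quot_subset:
  assumes "\<And>y. y \<in> L' \<Longrightarrow> \<exists>x\<in>L. {r. s r x \<in> N} \<subseteq> {r. t r y \<in> N'}"
  shows "Supp_quot t L' N' \<subseteq> Supp_quot s L N"
  unfolding Supp_quot_def using assms by blast

lemma Supp_quot_extension_subset:
  assumes ms': "module s'" and ms: "module s" and ms'': "module s''"
    and sL': "module.subspace s' L'" and sL: "module.subspace s L"
    and linf: "linear_on s' s L' f" and ling: "linear_on s s'' L g"
    and ker: "f ` L' = {x \<in> L. g x = 0}" and F'L': "F' \<subseteq> L'" and HL: "H \<subseteq> L"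
  shows "Supp_quot s L (module.span s (f ` F' \<union> H))
           \<subseteq> Supp_quot s' L' (module.span s' F') \<union> Supp_quot s'' (g ` L) (module.span s'' (g ` H))"
proof
  let ?N = "module.span s (f ` F' \<union> H)"
  fix p assume "p \<in> Supp_quot s L ?N"
  then obtain x where p: "prime_ideal p" and x: "x \<in> L" and ann: "{r. s r x \<in> ?N} \<subseteq> p"
    unfolding Supp_quot_def by blast
  show "p \<in> Supp_quot s' L' (module.span s' F') \<union> Supp_quot s'' (g ` L) (module.span s'' (g ` H))"
  proof (rule ccontr)
    assume "\<not> ?thesis"
    then have out': "\<And>y. y \<in> L' \<Longrightarrow> \<exists>r. r \<notin> p \<and> s' r y \<in> module.span s' F'"
      and out'': "\<exists>r. r \<notin> p \<and> s'' r (g x) \<in> module.span s'' (g ` H)"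
      using p x unfolding Supp_quot_def by blast+
    obtain r where r: "r \<notin> p" "s'' r (g x) \<in> module.span s'' (g ` H)" using out'' by blast
    have rxL: "s r x \<in> L" using module.subspace_scale[OF ms sL x] .
    have "g (s r x) \<in> g ` module.span s H"
      using r(2) ling x linear_on_span_image[OF ms ms'' sL ling HL] unfolding linear_on_def by simp
    then obtain w where w: "w \<in> module.span s H" "g w = g (s r x)" by (metis imageE)
    have wL: "w \<in> L" using w(1) module.span_minimal[OF ms HL sL] by blast
    have "s r x - w \<in> {x \<in> L. g x = 0}"
      using module.subspace_diff[OF ms sL rxL wL] linear_on_diff[OF ms sL ling rxL wL] w(2) by simp
    then obtain y where y: "y \<in> L'" "s r x = f y + w" unfolding ker[symmetric]
      by (metis add_diff_cancel imageE diff_add_cancel)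
    obtain r' where r': "r' \<notin> p" "s' r' y \<in> module.span s' F'" using out'[OF y(1)] by blast
    have "s r' (f y) = f (s' r' y)" using linf y(1) unfolding linear_on_def by simp
    also have "\<dots> \<in> module.span s (f ` F')"
      using r'(2) linear_on_span_image[OF ms' ms sL' linf F'L'] by blast
    finally have "s r' (f y) \<in> ?N" using module.span_mono[OF ms, of "f ` F'"] by blast
    moreover have "s r' w \<in> ?N"
      using module.span_scale[OF ms] w(1) module.span_mono[OF ms, of H] by blast
    moreover have "s (r' * r) x = s r' (f y) + s r' w"
      using y(2) module.scale_right_distrib[OF ms] module.scale_scale[OF ms] by metis
    ultimately have "r' * r \<in> p" using ann module.span_add[OF ms] by fastforce
    then show False using p r(1) r'(1) unfolding prime_ideal_def by blast
  qed
qed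

lemma dim_Supp_quot_mono:
  assumes "Supp_quot s1 L1 N1 \<subseteq> Supp_quot s2 L2 N2"
  shows "dim_Supp_quot s1 L1 N1 \<le> dim_Supp_quot s2 L2 N2"
  unfolding dim_Supp_quot_def using assms by (intro SUP_subset_mono) auto

lemma dim_Supp_quot_le_sup:
  assumes "Supp_quot s1 L1 N1 \<subseteq> Supp_quot s2 L2 N2 \<union> Supp_quot s3 L3 N3"
  shows "dim_Supp_quot s1 L1 N1 \<le> sup (dim_Supp_quot s2 L2 N2) (dim_Supp_quot s3 L3 N3)"
proof -
  have "dim_Supp_quot s1 L1 N1
          \<le> Sup ((\<lambda>p. ereal_of_enat (dim_quot p)) ` (Supp_quot s2 L2 N2 \<union> Supp_quot s3 L3 N3))"
    unfolding dim_Supp_quot_def using assms by (intro SUP_subset_mono) auto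
  then show ?thesis unfolding dim_Supp_quot_def by (simp add: SUP_union)
qed

lemma in_dim_less_subspace:
  assumes noeth: "noetherian_ring TYPE('r::comm_ring_1)"
    and ms: "module (s :: 'r \<Rightarrow> 'm::ab_group_add \<Rightarrow> 'm)"
    and sL': "module.subspace s L'" and L'L: "L' \<subseteq> L" and "in_dim_less s L n"
  shows "in_dim_less s L' n"
proof -
  obtain F where F: "finite F" "F \<subseteq> L" "dim_Supp_quot s L (module.span s F) < ereal (real n)"
    using assms(5) unfolding in_dim_less_def by blast
  have M: "module.subspace s (L' \<inter> module.span s F)"
    using module.subspace_inter[OF ms sL' module.subspace_span[OF ms]] .
  obtain G where G: "finite G" "G \<subseteq> L'" "module.span s G = L' \<inter> module.span s F"
    using module.finitely_generated_subspace_of_span[OF ms noeth F(1) M Int_lower2] by blast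
  have "{r. s r x \<in> module.span s F} \<subseteq> {r. s r x \<in> module.span s G}" if "x \<in> L'" for x
    using G(3) that module.subspace_scale[OF ms sL'] by auto
  then have supp: "Supp_quot s L' (module.span s G) \<subseteq> Supp_quot s L (module.span s F)"
    using L'L by (intro Supp_quot_subset) auto
  have "dim_Supp_quot s L' (module.span s G) < ereal (real n)"
    using dim_Supp_quot_mono[OF supp] F(3) by (rule le_less_trans)
  then show ?thesis using G(1,2) unfolding in_dim_less_def by blast
qed

lemma in_dim_less_image:
  assumes ms: "module s" and mt: "module t" and sL: "module.subspace s L"
    and lin: "linear_on s t L g" and "in_dim_less s L n"
  shows "in_dim_less t (g ` L) n"
proof -
  obtain F where F: "finite F" "F \<subseteq> L" "dim_Supp_quot s L (module.span s F) < ereal (real n)"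
    using assms(5) unfolding in_dim_less_def by blast
  have "{r. s r x \<in> module.span s F} \<subseteq> {r. t r (g x) \<in> module.span t (g ` F)}" if "x \<in> L" for x
  proof
    fix r assume "r \<in> {r. s r x \<in> module.span s F}"
    then have "g (s r x) \<in> module.span t (g ` F)"
      using linear_on_span_image[OF ms mt sL lin F(2)] by blast
    then show "r \<in> {r. t r (g x) \<in> module.span t (g ` F)}"
      using lin that unfolding linear_on_def by simp
  qed
  then have supp: "Supp_quot t (g ` L) (module.span t (g ` F)) \<subseteq> Supp_quot s L (module.span s F)"
    by (intro Supp_quot_subset) blast
  have "dim_Supp_quot t (g ` L) (module.span t (g ` F)) < ereal (real n)"
    using dim_Supp_quot_mono[OF supp] F(3) by (rule le_less_trans)
  then show ?thesis using F(1,2) unfolding in_dim_less_def by blast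
qed

lemma in_dim_less_extension:
  assumes ms': "module s'" and ms: "module s" and ms'': "module s''"
    and sL': "module.subspace s' L'" and sL: "module.subspace s L"
    and linf: "linear_on s' s L' f" and ling: "linear_on s s'' L g"
    and ker: "f ` L' = {x \<in> L. g x = 0}"
    and "in_dim_less s' L' n" and "in_dim_less s'' (g ` L) n"
  shows "in_dim_less s L n"
proof -
  obtain F' where F': "finite F'" "F' \<subseteq> L'"
    "dim_Supp_quot s' L' (module.span s' F') < ereal (real n)"
    using assms(9) unfolding in_dim_less_def by blast
  obtain F'' where F'': "finite F''" "F'' \<subseteq> g ` L"
    "dim_Supp_quot s'' (g ` L) (module.span s'' F'') < ereal (real n)"
    using assms(10) unfolding in_dim_less_def by blast
  obtain H where H: "finite H" "H \<subseteq> L" "g ` H = F''"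
    using F''(1,2) finite_subset_image by metis
  have "dim_Supp_quot s L (module.span s (f ` F' \<union> H))
          \<le> sup (dim_Supp_quot s' L' (module.span s' F')) (dim_Supp_quot s'' (g ` L) (module.span s'' F''))"
    using dim_Supp_quot_le_sup[OF Supp_quot_extension_subset[OF assms(1-8) F'(2) H(2)]]
    unfolding H(3) .
  also have "\<dots> < ereal (real n)" using F'(3) F''(3) by (simp add: sup_max)
  finally show ?thesis
    using F'(1,2) H(1,2) ker unfolding in_dim_less_def by (intro exI[of _ "f ` F' \<union> H"]) auto
qed

theorem corollary2p13:
  fixes n :: nat
  assumes "noetherian_ring TYPE('r::comm_ring_1)"
  shows
    \<comment> \<open>closed under submodules\<close>
    "(\<forall>(s :: 'r \<Rightarrow> 'a::ab_group_add \<Rightarrow> 'a) L L'.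
        module s \<and> module.subspace s L \<and> module.subspace s L' \<and> L' \<subseteq> L \<and>
        in_dim_less s L n \<longrightarrow> in_dim_less s L' n)
   \<and> \<comment> \<open>closed under quotients (surjective R-linear images)\<close>
     (\<forall>(s :: 'r \<Rightarrow> 'b::ab_group_add \<Rightarrow> 'b) (t :: 'r \<Rightarrow> 'c::ab_group_add \<Rightarrow> 'c) L L'' g.
        module s \<and> module t \<and> module.subspace s L \<and> module.subspace t L'' \<and>
        linear_on s t L g \<and> g ` L = L'' \<and> in_dim_less s L n \<longrightarrow> in_dim_less t L'' n)
   \<and> \<comment> \<open>closed under extensions: 0 \<rightarrow> L' \<rightarrow> L \<rightarrow> L'' \<rightarrow> 0 exact\<close>
     (\<forall>(s' :: 'r \<Rightarrow> 'd::ab_group_add \<Rightarrow> 'd) (s :: 'r \<Rightarrow> 'e::ab_group_add \<Rightarrow> 'e)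
        (s'' :: 'r \<Rightarrow> 'f::ab_group_add \<Rightarrow> 'f) L' L L'' f g.
        module s' \<and> module s \<and> module s'' \<and>
        module.subspace s' L' \<and> module.subspace s L \<and> module.subspace s'' L'' \<and>
        linear_on s' s L' f \<and> linear_on s s'' L g \<and>
        inj_on f L' \<and> f ` L' = {x \<in> L. g x = 0} \<and> g ` L = L'' \<and>
        in_dim_less s' L' n \<and> in_dim_less s'' L'' n \<longrightarrow> in_dim_less s L n)"
proof (intro conjI allI impI; elim conjE)
  show "in_dim_less s L' n"
    if "module s" "module.subspace s L" "module.subspace s L'" "L' \<subseteq> L" "in_dim_less s L n"
    for s :: "'r \<Rightarrow> 'a \<Rightarrow> 'a" and L L'
    using in_dim_less_subspace[OF assms] that by blast
  show "in_dim_less t L'' n"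
    if "module s" "module t" "module.subspace s L" "module.subspace t L''" "linear_on s t L g"
      "g ` L = L''" "in_dim_less s L n"
    for s :: "'r \<Rightarrow> 'b \<Rightarrow> 'b" and t :: "'r \<Rightarrow> 'c \<Rightarrow> 'c" and L L'' g
    using in_dim_less_image[OF that(1-3,5,7)] that(6) by simp
  show "in_dim_less s L n"
    if "module s'" "module s" "module s''" "module.subspace s' L'" "module.subspace s L"
      "module.subspace s'' L''" "linear_on s' s L' f" "linear_on s s'' L g" "inj_on f L'"
      "f ` L' = {x \<in> L. g x = 0}" "g ` L = L''" "in_dim_less s' L' n" "in_dim_less s'' L'' n"
    for s' :: "'r \<Rightarrow> 'd \<Rightarrow> 'd" and s :: "'r \<Rightarrow> 'e \<Rightarrow> 'e" and s'' :: "'r \<Rightarrow> 'f \<Rightarrow> 'f"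
      and L' L L'' f g
    using in_dim_less_extension[OF that(1,2,3,4,5,7,8,10,12)] that(11,13) by simp
qed

end
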